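(* For every $N\ge2$ and every $(n_0,\dots,n_N)$ the following hold: (R1) for every integer $0\le k\le n_{\min}$: $d_{(n_0,\dots,n_N)}(k)=d_{(n_0-k,\dots,n_N-k)}(0)$; (R2) for every $i\in\{1,\dots,N-1\}$: $d_{(n_0,\dots,n_N)}(0)=\min_{j}\big[d_{(n_0,\dots,n_i)}(j)+d_{(j,n_{i+1},\dots,n_N)}(0)\big]$, the minimum over integers $0\le j\le\min(n_0,\dots,n_i)$; (R3) for every $i\in\{1,\dots,N-1\}$ and integer $0\le k\le n_{\min}$: $d_{(n_0,\dots,n_N)}(k)=\min_{j}\big[d_{(n_0,\dots,n_i)}(j)+d_{(j,n_{i+1},\dots,n_N)}(k)\big]$, the minimum over integers $k\le j\le\min(n_0,\dots,n_i)$.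
   Context: For a vector $\mathbf n=(n_0,\dots,n_N)$ of positive integers ($N\ge1$), let $\tilde n_0\le\cdots\le\tilde n_N$ be its nondecreasing rearrangement, $n_{\min}=\tilde n_0$, $c_i=1-i+\min_{k'=1,\dots,N}\lfloor(\sum_{l=0}^{k'}\tilde n_l-i)/k'\rfloor$ for $i=1,\dots,n_{\min}$, and $d_{\mathbf n}(k)=\sum_{i=k+1}^{n_{\min}}c_i$ for integers $0\le k\le n_{\min}$ (so $d_{\mathbf n}(n_{\min})=0$). This $d_{\mathbf n}$ is the diversity-multiplexing tradeoff (at integer points) of the $(n_0,\dots,n_N)$ Rayleigh product channel $\mathbf y=\sqrt{\mathsf{SNR}/(n_1\cdots n_N)}\mathbf H_1\cdots\mathbf H_N\mathbf x+\mathbf z$ with independent i.i.d. $\mathcal{CN}(0,1)$ matrices $\mathbf H_i\in\mathbb C^{n_{i-1}\times n_i}$. Convention: if some entry of $\mathbf n$ is $0$, then $d_{\mathbf n}(0)=0$. *)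

theory Defs
  imports Complex_Main
begin

text \<open>A vector (n_0,...,n_N) is a list of naturals of length N+1.
  nmin = smallest entry (= first entry of the nondecreasing rearrangement).\<close>

definition nmin :: "nat list \<Rightarrow> nat" where
  "nmin ns = Min (set ns)"

definition dmt_c :: "nat list \<Rightarrow> nat \<Rightarrow> int" where
  "dmt_c ns i = 1 - int i +
     Min ((\<lambda>k'. \<lfloor>(real_of_int ((\<Sum>l\<le>k'. int (sort ns ! l)) - int i)) / real k'\<rfloor>)
          ` {1..length ns - 1})"

definition dmt :: "nat list \<Rightarrow> nat \<Rightarrow> int" where
  "dmt ns k = (if k = 0 \<and> 0 \<in> set ns then 0
               else (\<Sum>i\<in>{k+1..nmin ns}. dmt_c ns i))"

end

theory Submission
  imports Defs "HOL-Library.Multiset"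
begin

text \<open>
  Write \<open>m = n\<^sub>m\<^sub>i\<^sub>n\<close> and \<open>excess w = \<Sum> (w - x)\<^sub>+\<close> over all entries but one copy of
  the smallest.  Because the entries are sorted, the floor in \<open>c\<^sub>i\<close> is the largest \<open>w\<close> with
  \<open>excess w \<le> m - i\<close>, so \<open>c\<^sub>i\<close> counts a level set of the excess.  Double counting then writes
  \<open>d(0)\<close> as a sum over \<open>w\<close> of truncated differences, which yields the one-step recursion
  \<open>d\<^sub>X\<^sub>@\<^sub>[\<^sub>y\<^sub>](0) = \<Sum>\<^sub>i min(c\<^sub>i, y) = min\<^sub>j [d\<^sub>X(j) + j y]\<close>.

  The
  level-set description of the \<open>c\<^sub>i\<close> gives (R2) for the last factor; induction on the number of
  remaining factors, reassociating a minimum over pairs, gives (R2) for every split point, and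
  (R3) follows from (R1) and (R2).
\<close>

lemma Min_nested:
  fixes f :: "'a \<Rightarrow> 'b \<Rightarrow> 'c::linorder"
  assumes "finite A" "A \<noteq> {}" "\<And>a. a \<in> A \<Longrightarrow> finite (B a) \<and> B a \<noteq> {}"
  shows "Min ((\<lambda>a. Min (f a ` B a)) ` A) = Min ((\<lambda>(a, b). f a b) ` Sigma A B)"
proof -
  have fin: "finite (Sigma A B)" "Sigma A B \<noteq> {}" using assms by auto
  show ?thesis
  proof (rule antisym)
    show "Min ((\<lambda>a. Min (f a ` B a)) ` A) \<le> Min ((\<lambda>(a, b). f a b) ` Sigma A B)"
      using assms fin by (auto simp: Min_le_iff)
    show "Min ((\<lambda>(a, b). f a b) ` Sigma A B) \<le> Min ((\<lambda>a. Min (f a ` B a)) ` A)"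
    proof (rule Min.boundedI)
      show "finite ((\<lambda>a. Min (f a ` B a)) ` A)" "(\<lambda>a. Min (f a ` B a)) ` A \<noteq> {}"
        using assms by auto
      fix z assume "z \<in> (\<lambda>a. Min (f a ` B a)) ` A"
      then obtain a where a: "a \<in> A" and z: "z = Min (f a ` B a)" by blast
      then obtain b where "b \<in> B a" "Min (f a ` B a) = f a b"
        using assms(3) by (meson obtains_MIN)
      then show "Min ((\<lambda>(a, b). f a b) ` Sigma A B) \<le> z"
        using a fin z by (auto intro!: Min_le)
    qed
  qed
qed

lemma triangle_reindex:
  fixes a b :: nat
  shows "(\<lambda>(t, j). g (j + t) t) ` Sigma {0..min a b} (\<lambda>t. {0..a - t})
       = (\<lambda>(j, t). g j t) ` Sigma {0..a} (\<lambda>j. {0..min j b})"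
proof -
  have "Sigma {0..a} (\<lambda>j. {0..min j b}) = (\<lambda>(t, j). (j + t, t)) ` Sigma {0..min a b} (\<lambda>t. {0..a - t})"
  proof (intro set_eqI iffI)
    fix p assume "p \<in> Sigma {0..a} (\<lambda>j. {0..min j b})"
    then obtain j t where "p = (j, t)" "t \<le> j" "j \<le> a" "t \<le> b" by auto
    then show "p \<in> (\<lambda>(t, j). (j + t, t)) ` Sigma {0..min a b} (\<lambda>t. {0..a - t})"
      by (intro image_eqI[where x = "(t, j - t)"]) auto
  qed auto
  then show ?thesis by (simp add: image_image case_prod_beta)
qed

lemma downclosed_initial_segment:
  fixes U :: nat
  assumes "\<And>a b. 1 \<le> a \<Longrightarrow> a \<le> b \<Longrightarrow> P b \<Longrightarrow> P a"
  shows "\<exists>L\<le>U. {w\<in>{1..U}. P w} = {1..L}"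
proof (induction U)
  case 0 show ?case by auto
next
  case (Suc U)
  then obtain L where L: "L \<le> U" "{w\<in>{1..U}. P w} = {1..L}" by auto
  show ?case
  proof (cases "P (Suc U)")
    case True
    then have "{w\<in>{1..Suc U}. P w} = {1..Suc U}" using assms by auto
    then show ?thesis by auto
  next
    case False
    have "{w\<in>{1..Suc U}. P w} = {w\<in>{1..U}. P w}" using False by (auto simp: le_Suc_eq)
    then have "{w\<in>{1..Suc U}. P w} = {1..L}" using L(2) by simp
    then show ?thesis using L(1) by (intro exI[of _ L]) auto
  qed
qed

lemma card_downclosed_truncate:
  assumes "\<And>a b. 1 \<le> a \<Longrightarrow> a \<le> b \<Longrightarrow> P b \<Longrightarrow> P a"
  shows "card {w\<in>{1..U}. P w \<and> w \<le> t} = min (card {w\<in>{1..U}. P w}) t"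
proof -
  obtain L where L: "{w\<in>{1..U}. P w} = {1..L}"
    using downclosed_initial_segment[of P U] assms by blast
  have "{w\<in>{1..U}. P w \<and> w \<le> t} = {w\<in>{1..U}. P w} \<inter> {..t}" by auto
  also have "\<dots> = {1..min L t}" using L by auto
  finally show ?thesis using L by simp
qed

lemma sum_card_swap:
  assumes "finite I" "finite W"
  shows "(\<Sum>i\<in>I. card {w\<in>W. P i w}) = (\<Sum>w\<in>W. card {i\<in>I. P i w})"
proof -
  have "(\<Sum>i\<in>I. card {w\<in>W. P i w}) = (\<Sum>i\<in>I. \<Sum>w\<in>W. if P i w then 1 else 0)"
    using assms by (simp add: sum.If_cases Int_def)
  also have "\<dots> = (\<Sum>w\<in>W. \<Sum>i\<in>I. if P i w then 1 else 0)" by (rule sum.swap)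
  also have "\<dots> = (\<Sum>w\<in>W. card {i\<in>I. P i w})"
    using assms by (simp add: sum.If_cases Int_def)
  finally show ?thesis .
qed

text \<open>Double counting of the pairs \<open>(i, w)\<close> with \<open>b w < i \<le> m - a w\<close>: for fixed \<open>w\<close> there
  are exactly \<open>m - (a w + b w)\<close> admissible \<open>i\<close>.\<close>

lemma double_count:
  assumes "finite W"
  shows "(\<Sum>i\<in>{1..m}. card {w\<in>W. a w \<le> m - i \<and> b w < i}) = (\<Sum>w\<in>W. m - (a w + b w))"
proof -
  have "card {i\<in>{1..m}. a w \<le> m - i \<and> b w < i} = m - (a w + b w)" for w
  proof -
    have "{i\<in>{1..m}. a w \<le> m - i \<and> b w < i} = {b w + 1..m - a w}" by (rule set_eqI) (simp, arith)
    then show ?thesis by simp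
  qed
  then show ?thesis using sum_card_swap[of "{1..m}" W] assms by simp
qed

text \<open>For a sorted list the largest prefix sum of \<open>w - x\<close> is the sum of the positive parts
  \<open>(w - x)\<^sub>+\<close>; stated as a criterion for an upper bound \<open>p \<ge> 0\<close>.\<close>

lemma sorted_prefix_sums_bound:
  fixes r :: "nat list" and w :: nat and p :: int
  assumes "sorted r" "0 \<le> p"
  shows "(\<forall>k\<le>length r. (\<Sum>x\<leftarrow>take k r. int w - int x) \<le> p) \<longleftrightarrow> int (\<Sum>x\<leftarrow>r. w - x) \<le> p"
  using assms
proof (induction r arbitrary: p)
  case Nil then show ?case by simp
next
  case (Cons a r)
  have sr: "sorted r" and ar: "\<forall>x\<in>set r. a \<le> x" using Cons.prems(1) by auto
  have all_le_Suc: "(\<forall>k\<le>Suc n. Q k) \<longleftrightarrow> Q 0 \<and> (\<forall>k\<le>n. Q (Suc k))" for n and Q :: "nat \<Rightarrow> bool"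
  proof
    assume "\<forall>k\<le>Suc n. Q k"
    then show "Q 0 \<and> (\<forall>k\<le>n. Q (Suc k))" by auto
  next
    assume "Q 0 \<and> (\<forall>k\<le>n. Q (Suc k))"
    then show "\<forall>k\<le>Suc n. Q k" by (metis Suc_le_mono not0_implies_Suc)
  qed
  show ?case
  proof (cases "w \<le> a")
    case True
    have "(\<Sum>x\<leftarrow>a#r. w - x) = 0" using ar True by (auto simp: sum_list_eq_0_iff)
    then have "int (\<Sum>x\<leftarrow>a#r. w - x) \<le> p" using Cons.prems(2) by (simp only: of_nat_0)
    moreover have "(\<Sum>x\<leftarrow>take k (a#r). int w - int x) \<le> p" for k
    proof -
      have "(\<Sum>x\<leftarrow>take k (a#r). int w - int x) \<le> 0"
        using ar True set_take_subset[of k "a#r"] by (intro sum_list_nonpos) fastforce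
      then show ?thesis using Cons.prems(2) by linarith
    qed
    ultimately show ?thesis by blast
  next
    case False
    have rhs: "int (\<Sum>x\<leftarrow>a#r. w - x) = (int w - int a) + int (\<Sum>x\<leftarrow>r. w - x)"
      using False by simp
    have lhs: "(\<forall>k\<le>length (a#r). (\<Sum>x\<leftarrow>take k (a#r). int w - int x) \<le> p)
       \<longleftrightarrow> (\<forall>k\<le>length r. (\<Sum>x\<leftarrow>take k r. int w - int x) \<le> p - (int w - int a))"
      using Cons.prems(2) by (simp only: length_Cons all_le_Suc) (auto simp: algebra_simps)
    show ?thesis
    proof (cases "0 \<le> p - (int w - int a)")
      case True
      have "int (\<Sum>x\<leftarrow>r. w - x) \<le> p - (int w - int a) \<longleftrightarrow> int (\<Sum>x\<leftarrow>a#r. w - x) \<le> p"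
        unfolding rhs by linarith
      then show ?thesis using Cons.IH[OF sr True] lhs by blast
    next
      case neg: False
      have "\<not> (\<Sum>x\<leftarrow>take 0 r. int w - int x) \<le> p - (int w - int a)" using neg by simp
      then have "\<not> (\<forall>k\<le>length r. (\<Sum>x\<leftarrow>take k r. int w - int x) \<le> p - (int w - int a))"
        by blast
      moreover have "\<not> int (\<Sum>x\<leftarrow>a#r. w - x) \<le> p" using rhs neg by simp
      ultimately show ?thesis using lhs by blast
    qed
  qed
qed

lemma le_floor_divide_iff:
  assumes "0 < k"
  shows "z \<le> \<lfloor>real_of_int A / real k\<rfloor> \<longleftrightarrow> z * int k \<le> A"
proof -
  have "z \<le> \<lfloor>real_of_int A / real k\<rfloor> \<longleftrightarrow> real_of_int z * real k \<le> real_of_int A"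
    using assms by (simp add: le_floor_iff pos_le_divide_eq)
  also have "\<dots> \<longleftrightarrow> real_of_int (z * int k) \<le> real_of_int A" by simp
  also have "\<dots> \<longleftrightarrow> z * int k \<le> A" by (rule of_int_le_iff)
  finally show ?thesis .
qed

lemma nmin_le: "x \<in> set X \<Longrightarrow> nmin X \<le> x"
  by (simp add: nmin_def)

lemma nmin_in: "X \<noteq> [] \<Longrightarrow> nmin X \<in> set X"
  by (simp add: nmin_def)

lemma nmin_append: "X \<noteq> [] \<Longrightarrow> Y \<noteq> [] \<Longrightarrow> nmin (X @ Y) = min (nmin X) (nmin Y)"
  by (simp add: nmin_def Min_Un)

lemma nmin_Cons: "Y \<noteq> [] \<Longrightarrow> nmin (j # Y) = min j (nmin Y)"
  by (simp add: nmin_def)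

lemma sort_nth0_nmin:
  assumes "X \<noteq> []" shows "sort X ! 0 = nmin X"
proof -
  have ne: "sort X \<noteq> []" using assms by (metis length_0_conv length_sort)
  have "Min (set (sort X)) = sort X ! 0"
  proof (rule Min_eqI)
    show "sort X ! 0 \<in> set (sort X)" using assms by (intro nth_mem) simp
    fix y assume "y \<in> set (sort X)"
    then show "sort X ! 0 \<le> y" using sorted_sort[of X] ne by (cases "sort X") auto
  qed simp
  then show ?thesis by (simp add: nmin_def)
qed

lemma mset_tl_sort:
  assumes "X \<noteq> []" shows "mset (tl (sort X)) = mset X - {#nmin X#}"
proof -
  have ne: "sort X \<noteq> []" using assms by (metis length_0_conv length_sort)
  have "mset (sort X) = add_mset (sort X ! 0) (mset (tl (sort X)))" using ne by (cases "sort X") auto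
  then show ?thesis using sort_nth0_nmin[OF assms] by simp
qed

lemma prefix_sum_sort:
  assumes "X \<noteq> []" "k < length X"
  shows "(\<Sum>l\<le>k. int (sort X ! l)) = int (nmin X) + (\<Sum>x\<leftarrow>take k (tl (sort X)). int x)"
  using assms(2)
proof (induction k)
  case 0 then show ?case using sort_nth0_nmin[OF assms(1)] by simp
next
  case (Suc k)
  have "take (Suc k) (tl (sort X)) = take k (tl (sort X)) @ [sort X ! Suc k]"
    using Suc.prems by (simp add: take_Suc_conv_app_nth nth_tl)
  then show ?case using Suc by simp
qed

definition lower :: "nat \<Rightarrow> nat list \<Rightarrow> nat list" where
  "lower k X = map (\<lambda>x. x - k) X"

lemma length_lower [simp]: "length (lower k X) = length X"
  by (simp add: lower_def)

lemma lower_eq_Nil_iff [simp]: "lower k X = [] \<longleftrightarrow> X = []"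
  by (simp add: lower_def)

lemma lower_lower: "lower j (lower t X) = lower (j + t) X"
  by (simp add: lower_def add.commute)

lemma lower_Cons: "lower t (j # X) = (j - t) # lower t X"
  by (simp add: lower_def)

lemma lower_append: "lower t (X @ Y) = lower t X @ lower t Y"
  by (simp add: lower_def)

lemma nmin_lower:
  assumes "X \<noteq> []" shows "nmin (lower k X) = nmin X - k"
proof -
  have "mono (\<lambda>x::nat. x - k)" by (auto intro: monoI)
  then have "Min (set X) - k = Min ((\<lambda>x. x - k) ` set X)"
    using assms by (intro mono_Min_commute) auto
  then show ?thesis by (simp add: nmin_def lower_def)
qed

lemma sort_lower: "sort (lower k X) = lower k (sort X)"
  unfolding lower_def
proof (rule properties_for_sort)
  show "mset (map (\<lambda>x. x - k) (sort X)) = mset (map (\<lambda>x. x - k) X)" by simp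
  show "sorted (map (\<lambda>x. x - k) (sort X))"
    by (rule sorted_map_mono[OF sorted_sort]) (auto intro!: mono_onI diff_le_mono)
qed

text \<open>The zero convention is consistent with the sum formula, since an entry \<open>0\<close> forces
  \<open>n\<^sub>m\<^sub>i\<^sub>n = 0\<close>.\<close>

lemma dmt_as_sum: "dmt X k = (\<Sum>i\<in>{k+1..nmin X}. dmt_c X i)"
proof (cases "k = 0 \<and> 0 \<in> set X")
  case True
  then have "nmin X = 0" using nmin_le[of 0 X] by simp
  then show ?thesis using True by (simp add: dmt_def)
next
  case False then show ?thesis unfolding dmt_def by auto
qed

lemma dmt_c_antimono:
  assumes "2 \<le> length X" "i \<le> i'"
  shows "dmt_c X i' \<le> dmt_c X i"
proof -
  define f where "f j k' = \<lfloor>real_of_int ((\<Sum>l\<le>k'. int (sort X ! l)) - int j) / real k'\<rfloor>" for j k'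
  define A where "A = {1..length X - 1}"
  have A: "finite A" "A \<noteq> {}" using assms by (auto simp: A_def)
  have "f i' a \<le> f i a" for a
    unfolding f_def using assms(2) by (intro floor_mono divide_right_mono) auto
  then have "Min (f i' ` A) \<le> Min (f i ` A)"
    using A by (auto simp: Min_le_iff intro: order_trans)
  then show ?thesis using assms(2) by (simp add: dmt_c_def f_def A_def)
qed

text \<open>Lowering all entries by \<open>k \<le> n\<^sub>m\<^sub>i\<^sub>n\<close> lowers every prefix sum \<open>\<Sum>\<^sub>l\<^sub>\<le>\<^sub>k\<^sub>' \<tilde>n\<^sub>l\<close> by
  \<open>(k'+1) k\<close>, so it shifts the increments: \<open>c\<^sub>i\<close> becomes \<open>c\<^sub>i\<^sub>-\<^sub>k\<close>.\<close>

lemma dmt_c_lower: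
  assumes len: "2 \<le> length X" and k: "k \<le> nmin X" "k < i"
  shows "dmt_c (lower k X) (i - k) = dmt_c X i"
proof -
  define s where "s = sort X"
  define A where "A = {1..length X - 1}"
  define f where "f k' = \<lfloor>real_of_int ((\<Sum>l\<le>k'. int (s ! l)) - int i) / real k'\<rfloor>" for k'
  define g where "g k' = \<lfloor>real_of_int ((\<Sum>l\<le>k'. int (lower k s ! l)) - int (i - k)) / real k'\<rfloor>" for k'
  have A: "finite A" "A \<noteq> {}" using len by (auto simp: A_def)
  have g_f: "g k' = f k' - int k" if k': "k' \<in> A" for k'
  proof -
    have "(\<Sum>l\<le>k'. int (lower k s ! l)) = (\<Sum>l\<le>k'. int (s ! l) - int k)"
    proof (rule sum.cong[OF refl])
      fix l assume "l \<in> {..k'}"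
      then have l: "l < length s" using k' by (auto simp: A_def s_def)
      then have "s ! l \<in> set X" by (metis nth_mem s_def set_sort)
      then have "k \<le> s ! l" using k nmin_le[of "s ! l" X] by simp
      then show "int (lower k s ! l) = int (s ! l) - int k" using l by (simp add: lower_def)
    qed
    then have num: "(\<Sum>l\<le>k'. int (lower k s ! l)) - int (i - k)
        = ((\<Sum>l\<le>k'. int (s ! l)) - int i) - int k' * int k"
      using k by (simp add: sum_subtractf algebra_simps of_nat_diff)
    have "0 < k'" using k' by (auto simp: A_def)
    then have "real_of_int (P - int k' * int k) / real k' = real_of_int P / real k' - real_of_int (int k)"
      for P by (simp add: field_simps)
    then show ?thesis unfolding f_def g_def num by (metis floor_diff_of_int)
  qed
  have "Min (g ` A) = Min ((\<lambda>z. z - int k) ` f ` A)"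
    using g_f by (simp add: image_image)
  also have "\<dots> = Min (f ` A) - int k"
    using A by (simp add: mono_Min_commute[symmetric] monoI)
  finally show ?thesis
    using k by (simp add: dmt_c_def f_def g_def A_def s_def sort_lower)
qed

lemma dmt_lower:
  assumes len: "2 \<le> length X" and k: "k \<le> nmin X"
  shows "dmt X k = dmt (lower k X) 0"
proof -
  have X: "X \<noteq> []" using len by auto
  have "dmt X k = (\<Sum>i\<in>{1+k..(nmin X - k)+k}. dmt_c X i)" using k by (simp add: dmt_as_sum)
  also have "\<dots> = (\<Sum>i\<in>{1..nmin X - k}. dmt_c X (i + k))" by (rule sum.shift_bounds_cl_nat_ivl)
  also have "\<dots> = (\<Sum>i\<in>{1..nmin X - k}. dmt_c (lower k X) i)"
  proof (rule sum.cong[OF refl])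
    fix i assume "i \<in> {1..nmin X - k}"
    then show "dmt_c X (i + k) = dmt_c (lower k X) i" using dmt_c_lower[OF len k, of "i + k"] by simp
  qed
  also have "\<dots> = dmt (lower k X) 0" by (simp add: dmt_as_sum nmin_lower[OF X])
  finally show ?thesis .
qed

lemma dmt_c_pair:
  assumes "1 \<le> i" shows "dmt_c [a, b] i = int a + int b + 1 - 2 * int i"
proof -
  have "\<lfloor>real a + real b - real i\<rfloor> = int a + int b - int i"
    by (metis floor_of_int of_int_diff of_int_add of_int_of_nat_eq)
  then show ?thesis by (cases "a \<le> b") (auto simp: dmt_c_def add.commute)
qed

lemma dmt_pair: "dmt [a, b] 0 = int a * int b"
proof -
  have sum_formula: "(\<Sum>i\<in>{1..n}. int a + int b + 1 - 2 * int i) = int n * (int a + int b) - int n * int n"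
    for n by (induction n) (auto simp: algebra_simps)
  have "dmt [a, b] 0 = (\<Sum>i\<in>{1..min a b}. int a + int b + 1 - 2 * int i)"
    by (simp add: dmt_as_sum nmin_def dmt_c_pair)
  also have "\<dots> = int a * int b"
    unfolding sum_formula by (cases "a \<le> b") (auto simp: algebra_simps min_def)
  finally show ?thesis .
qed

section \<open>The excess function and the level sets of the thresholds\<close>

text \<open>The
  floor in \<open>c\<^sub>i\<close> is the largest \<open>w\<close> whose excess is at most \<open>n\<^sub>m\<^sub>i\<^sub>n - i\<close>.\<close>

definition excess :: "nat list \<Rightarrow> nat \<Rightarrow> nat" where
  "excess X w = (\<Sum>x\<in>#mset X - {#nmin X#}. w - x)"

lemma excess_sorted_tail:
  assumes "X \<noteq> []" shows "excess X w = (\<Sum>x\<leftarrow>tl (sort X). w - x)"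
proof -
  have "(\<Sum>x\<leftarrow>tl (sort X). w - x) = (\<Sum>x\<in>#mset (tl (sort X)). w - x)"
    by (metis mset_map sum_mset_sum_list)
  then show ?thesis unfolding excess_def using mset_tl_sort[OF assms] by simp
qed

lemma excess_zero:
  assumes "w \<le> nmin X" shows "excess X w = 0"
proof -
  have "w - x = 0" if "x \<in># mset X - {#nmin X#}" for x
    using in_diffD[OF that] nmin_le[of x X] assms by simp
  then show ?thesis unfolding excess_def by (simp add: sum_mset.neutral)
qed

lemma excess_mono: "a \<le> b \<Longrightarrow> excess X a \<le> excess X b"
  unfolding excess_def by (intro sum_mset_mono) auto

lemma excess_growth:
  assumes "2 \<le> length X" shows "w - Max (set X) \<le> excess X w"
proof -
  have "X \<noteq> []" using assms by auto
  then have "nmin X \<in># mset X" using nmin_in[of X] by simp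
  then have "size (mset X - {#nmin X#}) = length X - 1" by (simp add: size_Diff_singleton)
  then have "mset X - {#nmin X#} \<noteq> {#}" using assms by auto
  then obtain x0 where x0: "x0 \<in># mset X - {#nmin X#}" by blast
  then obtain R where R: "mset X - {#nmin X#} = add_mset x0 R" by (metis multi_member_split)
  have "x0 \<le> Max (set X)" using in_diffD[OF x0] by simp
  moreover have "excess X w = (w - x0) + (\<Sum>x\<in>#R. w - x)" unfolding excess_def R by simp
  ultimately show ?thesis by linarith
qed

lemma nmin_snoc: "X \<noteq> [] \<Longrightarrow> nmin (X @ [y]) = min (nmin X) y"
  by (simp add: nmin_def min.commute)

lemma excess_snoc:
  assumes "X \<noteq> []" shows "excess (X @ [y]) w = excess X w + (w - max (nmin X) y)"
proof -
  define m where "m = nmin X"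
  obtain R where R: "mset X = add_mset m R" using nmin_in[OF assms] by (metis m_def multi_member_split set_mset_mset)
  have "mset (X @ [y]) - {#nmin (X @ [y])#} = add_mset (max m y) (mset X - {#m#})"
  proof (cases "m \<le> y")
    case True
    then have "nmin (X @ [y]) = m" using nmin_snoc[OF assms] by (simp add: m_def)
    then show ?thesis using True R by (simp add: add_mset_commute)
  next
    case False
    then have "nmin (X @ [y]) = y" using nmin_snoc[OF assms] by (simp add: m_def)
    then show ?thesis using False R by simp
  qed
  then show ?thesis by (simp add: excess_def m_def add.commute)
qed

text \<open>The level-set description of the threshold \<open>c\<^sub>i + i - 1 = min\<^sub>k\<^sub>' \<lfloor>\<dots>\<rfloor>\<close>: a bound
  \<open>w \<le> \<lfloor>\<dots>\<rfloor>\<close> for the \<open>k'\<close>-th term says that the first \<open>k'\<close> entries of the sorted tail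
  have total gap \<open>\<Sum> (w - x)\<close> at most \<open>n\<^sub>m\<^sub>i\<^sub>n - i\<close>; over all \<open>k'\<close> this is the excess.\<close>

lemma le_threshold_iff_excess:
  assumes len: "2 \<le> length X" and i: "1 \<le> i" "i \<le> nmin X"
  shows "int w \<le> dmt_c X i + int i - 1 \<longleftrightarrow> excess X w \<le> nmin X - i"
proof -
  define s m N where "s = sort X" and "m = nmin X" and "N = length X - 1"
  define f where "f k' = \<lfloor>real_of_int ((\<Sum>l\<le>k'. int (s ! l)) - int i) / real k'\<rfloor>" for k'
  define Q where "Q k' \<longleftrightarrow> (\<Sum>x\<leftarrow>take k' (tl s). int w - int x) \<le> int m - int i" for k'
  have X: "X \<noteq> []" and N: "1 \<le> N" and ls: "length (tl s) = N" using len by (auto simp: s_def N_def)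
  have "dmt_c X i + int i - 1 = Min (f ` {1..N})" by (simp add: dmt_c_def f_def s_def N_def)
  then have "int w \<le> dmt_c X i + int i - 1 \<longleftrightarrow> (\<forall>k'\<in>{1..N}. int w \<le> f k')"
    using N by simp
  also have "\<dots> \<longleftrightarrow> (\<forall>k'\<in>{1..N}. Q k')"
  proof (intro ball_cong refl)
    fix k' assume k': "k' \<in> {1..N}"
    have "k' < length X" using k' len by (auto simp: N_def)
    then have prefix: "(\<Sum>l\<le>k'. int (s ! l)) = int m + (\<Sum>x\<leftarrow>take k' (tl s). int x)"
      using prefix_sum_sort[OF X] by (simp add: s_def m_def)
    have "length (take k' (tl s)) = k'" using k' ls by simp
    then have gaps: "(\<Sum>x\<leftarrow>take k' (tl s). int w - int x) = int w * int k' - (\<Sum>x\<leftarrow>take k' (tl s). int x)"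
      by (simp add: sum_list_subtractf sum_list_triv mult.commute)
    have "int w \<le> f k' \<longleftrightarrow> int w * int k' \<le> (\<Sum>l\<le>k'. int (s ! l)) - int i"
      unfolding f_def using k' by (intro le_floor_divide_iff) auto
    also have "\<dots> \<longleftrightarrow> Q k'" unfolding Q_def prefix gaps by linarith
    finally show "int w \<le> f k' \<longleftrightarrow> Q k'" .
  qed
  also have "\<dots> \<longleftrightarrow> (\<forall>k'\<le>length (tl s). Q k')"
  proof
    assume all: "\<forall>k'\<in>{1..N}. Q k'"
    have "Q 0" using i by (simp add: Q_def m_def)
    show "\<forall>k'\<le>length (tl s). Q k'"
    proof (intro allI impI)
      fix k' assume "k' \<le> length (tl s)"
      then show "Q k'" using all \<open>Q 0\<close> ls by (cases "k' = 0") auto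
    qed
  qed (use ls in auto)
  also have "\<dots> \<longleftrightarrow> int (\<Sum>x\<leftarrow>tl s. w - x) \<le> int m - int i"
    unfolding Q_def using i by (intro sorted_prefix_sums_bound) (auto simp: s_def m_def sorted_tl)
  also have "\<dots> \<longleftrightarrow> excess X w \<le> m - i"
    using i excess_sorted_tail[OF X] by (simp add: s_def m_def of_nat_diff[symmetric] del: of_nat_diff)
  finally show ?thesis by (simp add: m_def)
qed

lemma dmt_c_level_count:
  assumes len: "2 \<le> length X" and i: "1 \<le> i" "i \<le> nmin X"
    and U: "\<And>w. U < w \<Longrightarrow> nmin X < excess X w"
  shows "dmt_c X i = int (card {w\<in>{1..U}. excess X w \<le> nmin X - i}) - int i + 1"
proof -
  define T where "T = dmt_c X i + int i - 1"
  note level = le_threshold_iff_excess[OF len i, folded T_def]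
  have "1 \<le> T" using level[of 1] excess_zero[of 1 X] i by simp
  have "{w\<in>{1..U}. excess X w \<le> nmin X - i} = {1..nat T}"
  proof (intro set_eqI iffI)
    fix w assume "w \<in> {w\<in>{1..U}. excess X w \<le> nmin X - i}"
    then show "w \<in> {1..nat T}" using level[of w] by auto
  next
    fix w assume w: "w \<in> {1..nat T}"
    then have "excess X w \<le> nmin X - i" using level[of w] \<open>1 \<le> T\<close> by auto
    moreover then have "w \<le> U" using U[of w] by (meson diff_le_self le_trans not_le)
    ultimately show "w \<in> {w\<in>{1..U}. excess X w \<le> nmin X - i}" using w by auto
  qed
  then show ?thesis using \<open>1 \<le> T\<close> by (simp add: T_def)
qed

lemma sum_level_counts:
  assumes "finite W"
  shows "(\<Sum>i\<in>{1..m}. int (card {w\<in>W. a w \<le> m - i \<and> b w < i}) - int i + 1)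
       = int (\<Sum>w\<in>W. m - (a w + b w)) - (\<Sum>i\<in>{1..m}. int i - 1)"
proof -
  have "(\<Sum>i\<in>{1..m}. int (card {w\<in>W. a w \<le> m - i \<and> b w < i}) - int i + 1)
      = int (\<Sum>i\<in>{1..m}. card {w\<in>W. a w \<le> m - i \<and> b w < i}) - (\<Sum>i\<in>{1..m}. int i - 1)"
    by (simp add: sum.distrib sum_subtractf algebra_simps)
  also have "\<dots> = int (\<Sum>w\<in>W. m - (a w + b w)) - (\<Sum>i\<in>{1..m}. int i - 1)"
    by (simp only: double_count[OF assms])
  finally show ?thesis .
qed

lemma dmt_zero_count:
  assumes len: "2 \<le> length X" and U: "\<And>w. U < w \<Longrightarrow> nmin X < excess X w"
  shows "dmt X 0 = int (\<Sum>w\<in>{1..U}. nmin X - excess X w) - (\<Sum>i\<in>{1..nmin X}. int i - 1)"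
proof -
  define m where "m = nmin X"
  have "dmt X 0 = (\<Sum>i\<in>{1..m}. int (card {w\<in>{1..U}. excess X w \<le> m - i \<and> 0 < i}) - int i + 1)"
  proof -
    have "{w\<in>{1..U}. excess X w \<le> m - i \<and> 0 < i} = {w\<in>{1..U}. excess X w \<le> m - i}" if "1 \<le> i" for i
      using that by auto
    then show ?thesis using dmt_c_level_count[OF len _ _ U] by (simp add: dmt_as_sum m_def)
  qed
  then show ?thesis using sum_level_counts[where W="{1..U}" and m=m and a="excess X" and b="\<lambda>_. 0"] by (simp add: m_def)
qed

lemma sum_min_dmt_c_count:
  assumes len: "2 \<le> length X" and U: "\<And>w. U < w \<Longrightarrow> nmin X < excess X w"
  shows "(\<Sum>i\<in>{1..nmin X}. min (dmt_c X i) (int y))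
       = int (\<Sum>w\<in>{1..U}. nmin X - (excess X w + (w - y))) - (\<Sum>i\<in>{1..nmin X}. int i - 1)"
proof -
  define m where "m = nmin X"
  have "min (dmt_c X i) (int y) = int (card {w\<in>{1..U}. excess X w \<le> m - i \<and> w - y < i}) - int i + 1"
    if i: "i \<in> {1..m}" for i
  proof -
    have "{w\<in>{1..U}. excess X w \<le> m - i \<and> w - y < i} = {w\<in>{1..U}. excess X w \<le> m - i \<and> w \<le> y + i - 1}"
      using i by auto
    moreover have "card {w\<in>{1..U}. excess X w \<le> m - i \<and> w \<le> y + i - 1}
        = min (card {w\<in>{1..U}. excess X w \<le> m - i}) (y + i - 1)"
      by (rule card_downclosed_truncate) (meson excess_mono order_trans)
    ultimately show ?thesis
      using dmt_c_level_count[OF len _ _ U, of i] i by (auto simp: m_def min_def)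
  qed
  then show ?thesis using sum_level_counts[where W="{1..U}" and m=m and a="excess X" and b="\<lambda>w. w - y"] by (simp add: m_def)
qed

lemma sum_capped_identity:
  assumes "y \<le> m"
  shows "int (\<Sum>w\<in>{1..m}. m - (w - y))
       = int m * int y + (\<Sum>i\<in>{1..m}. int i - 1) - (\<Sum>i\<in>{1..y}. int i - 1)"
  using assms
proof (induction m rule: dec_induct)
  case base
  have "(\<Sum>w\<in>{1..y}. y - (w - y)) = (\<Sum>w\<in>{1..y}. y)" by (rule sum.cong) auto
  then show ?case by simp
next
  case (step n)
  have "(\<Sum>w\<in>{1..n}. Suc n - (w - y)) = (\<Sum>w\<in>{1..n}. (n - (w - y)) + 1)"
    by (rule sum.cong) auto
  also have "\<dots> = (\<Sum>w\<in>{1..n}. n - (w - y)) + n"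
    by (subst sum.distrib) simp
  finally have "(\<Sum>w\<in>{1..Suc n}. Suc n - (w - y)) = (\<Sum>w\<in>{1..n}. n - (w - y)) + n + y"
    using step by simp
  then show ?case using step by (simp add: algebra_simps)
qed

text \<open>Exchanging the roles of the two caps \<open>y < m\<close> in a sum of truncated differences, for
  any profile \<open>e\<close> vanishing up to \<open>m\<close>: the two sums agree beyond \<open>m\<close>, and below \<open>m\<close> the
  difference is absorbed by the triangular numbers.\<close>

lemma sum_truncated_exchange:
  fixes e :: "nat \<Rightarrow> nat"
  assumes ym: "y < m" and mU: "m \<le> U" and low: "\<And>w. w \<le> m \<Longrightarrow> e w = 0"
  shows "int (\<Sum>w\<in>{1..U}. y - (e w + (w - m))) - (\<Sum>i\<in>{1..y}. int i - 1)
       = int (\<Sum>w\<in>{1..U}. m - (e w + (w - y))) - (\<Sum>i\<in>{1..m}. int i - 1)"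
proof -
  define tail where "tail = (\<Sum>w\<in>{m+1..U}. m - (e w + (w - y)))"
  have split: "(\<Sum>w\<in>{1..U}. F w) = (\<Sum>w\<in>{1..m}. F w) + (\<Sum>w\<in>{m+1..U}. F w)" for F :: "nat \<Rightarrow> nat"
  proof -
    have "{1..U} = {1..m} \<union> {m+1..U}" using mU by auto
    then show ?thesis by (simp add: sum.union_disjoint)
  qed
  have "(\<Sum>w\<in>{1..U}. y - (e w + (w - m))) = m * y + tail"
  proof -
    have "(\<Sum>w\<in>{1..m}. y - (e w + (w - m))) = (\<Sum>w\<in>{1..m}. y)" by (rule sum.cong) (auto simp: low)
    moreover have "(\<Sum>w\<in>{m+1..U}. y - (e w + (w - m))) = tail"
      unfolding tail_def using ym by (intro sum.cong) auto
    ultimately show ?thesis by (simp only: split) simp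
  qed
  moreover have "(\<Sum>w\<in>{1..U}. m - (e w + (w - y))) = (\<Sum>w\<in>{1..m}. m - (w - y)) + tail"
  proof -
    have "(\<Sum>w\<in>{1..m}. m - (e w + (w - y))) = (\<Sum>w\<in>{1..m}. m - (w - y))" by (rule sum.cong) (auto simp: low)
    then show ?thesis by (simp only: split tail_def)
  qed
  ultimately show ?thesis using sum_capped_identity[of y m] ym by (simp only: of_nat_add of_nat_mult)
qed

section \<open>Splitting off the last factor\<close>

text \<open>Both sides are written
  as sums over \<open>w\<close> via \<open>dmt_zero_count\<close> and \<open>sum_min_dmt_c_count\<close>; they coincide if
  \<open>n\<^sub>m\<^sub>i\<^sub>n \<le> y\<close> and are related by \<open>sum_truncated_exchange\<close> otherwise.\<close>

lemma dmt_snoc_sum_min: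
  assumes len: "2 \<le> length X"
  shows "dmt (X @ [y]) 0 = (\<Sum>i\<in>{1..nmin X}. min (dmt_c X i) (int y))"
proof -
  define m U e where "m = nmin X" and "U = nmin X + Max (set X)" and "e = excess X"
  have X: "X \<noteq> []" using len by auto
  have big: "m < e w" if "U < w" for w
    using excess_growth[OF len, of w] that by (simp add: U_def m_def e_def)
  have big_snoc: "nmin (X @ [y]) < excess (X @ [y]) w" if "U < w" for w
    using big[OF that] by (simp add: excess_snoc[OF X] nmin_snoc[OF X] m_def e_def)
  have lhs: "dmt (X @ [y]) 0 = int (\<Sum>w\<in>{1..U}. min m y - (e w + (w - max m y)))
                              - (\<Sum>i\<in>{1..min m y}. int i - 1)"
    using dmt_zero_count[of "X @ [y]" U] len big_snoc
    by (simp add: excess_snoc[OF X] nmin_snoc[OF X] m_def e_def)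
  have rhs: "(\<Sum>i\<in>{1..m}. min (dmt_c X i) (int y))
      = int (\<Sum>w\<in>{1..U}. m - (e w + (w - y))) - (\<Sum>i\<in>{1..m}. int i - 1)"
    using sum_min_dmt_c_count[OF len, of U y] big by (simp add: m_def e_def)
  show ?thesis
  proof (cases "m \<le> y")
    case True
    then have "min m y = m" "max m y = y" by auto
    then show ?thesis using lhs rhs unfolding m_def[symmetric] by simp
  next
    case False
    then have "min m y = y" "max m y = m" by auto
    moreover have "m \<le> U" by (simp add: U_def m_def)
    moreover have "e w = 0" if "w \<le> m" for w using excess_zero that by (simp add: e_def m_def)
    ultimately show ?thesis using lhs rhs sum_truncated_exchange[of y m U e] False
      unfolding m_def[symmetric] by simp
  qed
qed

text \<open>Since the \<open>c\<^sub>i\<close> decrease, \<open>\<Sum>\<^sub>i min(c\<^sub>i, y)\<close> is the smallest value of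
  \<open>d(j) + j y = \<Sum>\<^sub>i\<^sub>\<le>\<^sub>j y + \<Sum>\<^sub>i\<^sub>>\<^sub>j c\<^sub>i\<close>, attained where the \<open>c\<^sub>i\<close> drop below \<open>y\<close>.\<close>

lemma Min_dmt_plus_linear:
  assumes len: "2 \<le> length X"
  shows "Min ((\<lambda>j. dmt X j + int j * int y) ` {0..nmin X}) = (\<Sum>i\<in>{1..nmin X}. min (dmt_c X i) (int y))"
proof -
  define m c where "m = nmin X" and "c = dmt_c X"
  have as_sum: "dmt X j + int j * int y = (\<Sum>i\<in>{1..m}. if i \<le> j then int y else c i)" if "j \<le> m" for j
  proof -
    have "{1..m} = {1..j} \<union> {j+1..m}" using that by auto
    then have "(\<Sum>i\<in>{1..m}. if i \<le> j then int y else c i)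
        = (\<Sum>i\<in>{1..j}. if i \<le> j then int y else c i) + (\<Sum>i\<in>{j+1..m}. if i \<le> j then int y else c i)"
      by (simp add: sum.union_disjoint)
    also have "\<dots> = int j * int y + (\<Sum>i\<in>{j+1..m}. c i)" by simp
    finally show ?thesis by (simp add: dmt_as_sum m_def c_def)
  qed
  obtain L where L: "L \<le> m" "{i\<in>{1..m}. int y < c i} = {1..L}"
    using downclosed_initial_segment[of "\<lambda>i. int y < c i" m] dmt_c_antimono[OF len]
    by (force simp: c_def)
  have at_L: "(\<Sum>i\<in>{1..m}. if i \<le> L then int y else c i) = (\<Sum>i\<in>{1..m}. min (c i) (int y))"
  proof (rule sum.cong[OF refl])
    fix i assume i: "i \<in> {1..m}"
    have "i \<in> {i\<in>{1..m}. int y < c i} \<longleftrightarrow> i \<in> {1..L}" using L(2) by simp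
    then have "i \<le> L \<longleftrightarrow> int y < c i" using i by simp
    then show "(if i \<le> L then int y else c i) = min (c i) (int y)" by auto
  qed
  show ?thesis
  proof (rule Min_eqI)
    fix z assume "z \<in> (\<lambda>j. dmt X j + int j * int y) ` {0..nmin X}"
    then obtain j where j: "j \<le> m" "z = dmt X j + int j * int y" by (auto simp: m_def)
    have "(\<Sum>i\<in>{1..m}. min (c i) (int y)) \<le> (\<Sum>i\<in>{1..m}. if i \<le> j then int y else c i)"
      by (rule sum_mono) auto
    then show "(\<Sum>i\<in>{1..nmin X}. min (dmt_c X i) (int y)) \<le> z"
      using as_sum[OF j(1)] j by (simp add: m_def c_def)
  next
    have "(\<Sum>i\<in>{1..nmin X}. min (dmt_c X i) (int y)) = dmt X L + int L * int y"
      using as_sum[OF L(1)] at_L by (simp add: m_def c_def)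
    then show "(\<Sum>i\<in>{1..nmin X}. min (dmt_c X i) (int y)) \<in> (\<lambda>j. dmt X j + int j * int y) ` {0..nmin X}"
      using L(1) by (auto simp: m_def)
  qed simp
qed

lemma dmt_snoc_split:
  assumes len: "2 \<le> length X"
  shows "dmt (X @ [y]) 0 = Min ((\<lambda>j. dmt (lower j X) 0 + dmt [j, y] 0) ` {0..nmin X})"
proof -
  have "dmt (X @ [y]) 0 = Min ((\<lambda>j. dmt X j + int j * int y) ` {0..nmin X})"
    using dmt_snoc_sum_min[OF len] Min_dmt_plus_linear[OF len] by simp
  also have "(\<lambda>j. dmt X j + int j * int y) ` {0..nmin X} = (\<lambda>j. dmt (lower j X) 0 + dmt [j, y] 0) ` {0..nmin X}"
    by (rule image_cong[OF refl]) (simp add: dmt_lower[OF len] dmt_pair)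
  finally show ?thesis .
qed

section \<open>Splitting the chain of factors anywhere\<close>

text \<open>Relation (R2) in general, by induction on the length of the right-hand part: splitting
  off the last entry of \<open>X @ Y\<close> and of \<open>j # Y\<close> by \<open>dmt_snoc_split\<close> turns both sides into
  minima of the same function over the same set of pairs, bracketed differently.\<close>

lemma dmt_append_split:
  assumes "2 \<le> length X" "Y \<noteq> []"
  shows "dmt (X @ Y) 0 = Min ((\<lambda>j. dmt (lower j X) 0 + dmt (j # Y) 0) ` {0..nmin X})"
  using assms
proof (induction "length Y" arbitrary: X Y rule: less_induct)
  case less
  obtain Z z where Y: "Y = Z @ [z]" using less.prems(2) by (metis rev_exhaust)
  show ?case
  proof (cases "Z = []")
    case True then show ?thesis using dmt_snoc_split[OF less.prems(1)] by (simp add: Y)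
  next
    case False
    define mX mZ where "mX = nmin X" and "mZ = nmin Z"
    \<comment> \<open>cost of splitting at \<open>j\<close> after \<open>X\<close> and at \<open>t\<close> before the last factor\<close>
    define h where "h j t = dmt (lower j X) 0 + dmt (lower t (j # Z)) 0 + dmt [t, z] 0" for j t
    have X: "X \<noteq> []" and lenXZ: "2 \<le> length (X @ Z)" using less.prems by auto
    have "dmt ((X @ Z) @ [z]) 0 = Min ((\<lambda>t. dmt (lower t (X @ Z)) 0 + dmt [t, z] 0) ` {0..min mX mZ})"
      using dmt_snoc_split[OF lenXZ, of z] nmin_append[OF X False] by (simp add: mX_def mZ_def)
    also have "\<dots> = Min ((\<lambda>t. Min ((\<lambda>j. h (j + t) t) ` {0..mX - t})) ` {0..min mX mZ})"
    proof (intro arg_cong[where f = Min] image_cong refl)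
      fix t
      define F where "F j = dmt (lower j (lower t X)) 0 + dmt (j # lower t Z) 0" for j
      have "length (lower t Z) < length Y" "2 \<le> length (lower t X)" "lower t Z \<noteq> []"
        using False less.prems by (auto simp: Y)
      then have "dmt (lower t (X @ Z)) 0 = Min (F ` {0..mX - t})"
        unfolding lower_append F_def mX_def nmin_lower[OF X, symmetric] by (rule less.hyps)
      moreover have "h (j + t) t = F j + dmt [t, z] 0" for j
        by (simp add: h_def F_def lower_lower lower_Cons)
      ultimately show "dmt (lower t (X @ Z)) 0 + dmt [t, z] 0 = Min ((\<lambda>j. h (j + t) t) ` {0..mX - t})"
        using Min_add_commute[of "{0..mX - t}" F "dmt [t, z] 0"] by simp
    qed
    also have "\<dots> = Min ((\<lambda>(t, j). h (j + t) t) ` Sigma {0..min mX mZ} (\<lambda>t. {0..mX - t}))"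
      by (rule Min_nested) auto
    also have "\<dots> = Min ((\<lambda>(j, t). h j t) ` Sigma {0..mX} (\<lambda>j. {0..min j mZ}))"
      by (simp only: triangle_reindex)
    also have "\<dots> = Min ((\<lambda>j. Min ((\<lambda>t. h j t) ` {0..min j mZ})) ` {0..mX})"
      by (rule Min_nested[symmetric]) auto
    also have "\<dots> = Min ((\<lambda>j. dmt (lower j X) 0 + dmt (j # Z @ [z]) 0) ` {0..mX})"
    proof (intro arg_cong[where f = Min] image_cong refl)
      fix j
      define G where "G t = dmt (lower t (j # Z)) 0 + dmt [t, z] 0" for t
      have "2 \<le> length (j # Z)" using False by (cases Z) auto
      then have "dmt ((j # Z) @ [z]) 0 = Min (G ` {0..min j mZ})"
        unfolding G_def mZ_def nmin_Cons[OF False, symmetric] by (rule dmt_snoc_split)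
      moreover have "h j t = G t + dmt (lower j X) 0" for t by (simp add: h_def G_def)
      ultimately show "Min ((\<lambda>t. h j t) ` {0..min j mZ}) = dmt (lower j X) 0 + dmt (j # Z @ [z]) 0"
        using Min_add_commute[of "{0..min j mZ}" G "dmt (lower j X) 0"] by simp
    qed
    finally show ?thesis by (simp add: Y mX_def)
  qed
qed

text \<open>Relation (R3): lower everything by \<open>k\<close> with (R1), split with (R2), and undo the
  lowering on both parts.\<close>

lemma dmt_split_at:
  assumes len: "2 \<le> length X" "Y \<noteq> []" and k: "k \<le> nmin (X @ Y)"
  shows "dmt (X @ Y) k = Min ((\<lambda>j. dmt X j + dmt (j # Y) k) ` {k..nmin X})"
proof -
  have X: "X \<noteq> []" using len by auto
  have kX: "k \<le> nmin X" and kY: "k \<le> nmin Y" using k nmin_append[OF X len(2)] by auto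
  have unshift: "dmt X (a + k) + dmt ((a + k) # Y) k = dmt (lower a (lower k X)) 0 + dmt (a # lower k Y) 0"
    if a: "a \<le> nmin X - k" for a
  proof -
    have "dmt X (a + k) = dmt (lower a (lower k X)) 0"
      using a kX by (simp add: dmt_lower[OF len(1)] lower_lower)
    moreover have "2 \<le> length ((a + k) # Y)" using len(2) by (cases Y) auto
    moreover have "k \<le> nmin ((a + k) # Y)" using kY by (simp add: nmin_Cons[OF len(2)])
    ultimately show ?thesis using dmt_lower[of "(a + k) # Y" k] by (simp add: lower_Cons)
  qed
  have "dmt (X @ Y) k = dmt (lower k X @ lower k Y) 0"
    using dmt_lower[of "X @ Y" k] len k by (simp add: lower_append)
  also have "\<dots> = Min ((\<lambda>a. dmt (lower a (lower k X)) 0 + dmt (a # lower k Y) 0) ` {0..nmin X - k})"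
    unfolding nmin_lower[OF X, symmetric] using len by (intro dmt_append_split) auto
  also have "\<dots> = Min ((\<lambda>a. dmt X (a + k) + dmt ((a + k) # Y) k) ` {0..nmin X - k})"
    using unshift by (intro arg_cong[where f = Min] image_cong) auto
  also have "\<dots> = Min ((\<lambda>j. dmt X j + dmt (j # Y) k) ` {k..nmin X})"
  proof -
    have "{k..nmin X} = (\<lambda>a. a + k) ` {0..nmin X - k}" using kX by (simp add: image_add_atLeastAtMost)
    then show ?thesis by (simp only: image_image)
  qed
  finally show ?thesis .
qed

theorem theorem5:
  fixes ns :: "nat list"
  assumes len: "length ns \<ge> 3"
    and pos: "\<forall>x\<in>set ns. x > 0"
  shows "(\<forall>k\<le>nmin ns. dmt ns k = dmt (map (\<lambda>x. x - k) ns) 0)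
    \<and> (\<forall>i\<in>{1..length ns - 2}.
         dmt ns 0 = Min ((\<lambda>j. dmt (take (i+1) ns) j + dmt (j # drop (i+1) ns) 0)
                          ` {0..nmin (take (i+1) ns)}))
    \<and> (\<forall>i\<in>{1..length ns - 2}. \<forall>k\<le>nmin ns.
         dmt ns k = Min ((\<lambda>j. dmt (take (i+1) ns) j + dmt (j # drop (i+1) ns) k)
                          ` {k..nmin (take (i+1) ns)}))"
proof -
  have R1: "dmt ns k = dmt (map (\<lambda>x. x - k) ns) 0" if "k \<le> nmin ns" for k
    using dmt_lower[of ns k] len that by (simp add: lower_def)
  have R3: "dmt ns k = Min ((\<lambda>j. dmt (take (i+1) ns) j + dmt (j # drop (i+1) ns) k)
                          ` {k..nmin (take (i+1) ns)})"
    if i: "i \<in> {1..length ns - 2}" and k: "k \<le> nmin ns" for i k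
  proof -
    have "2 \<le> length (take (i+1) ns)" "drop (i+1) ns \<noteq> []" using i len by auto
    then show ?thesis using dmt_split_at[of "take (i+1) ns" "drop (i+1) ns" k] k by simp
  qed
  have R2: "dmt ns 0 = Min ((\<lambda>j. dmt (take (i+1) ns) j + dmt (j # drop (i+1) ns) 0)
                          ` {0..nmin (take (i+1) ns)})" if "i \<in> {1..length ns - 2}" for i
    using R3[OF that, of 0] by simp
  show ?thesis using R1 R2 R3 by blast
qed

end
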